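(* For every $x\in(0,1)$, $\ \Gamma(x,1-x)\ \ge\ e^{-\Gamma'(1)}$.
   Context: For $x>0,y>0$ the Bigamma function is the (convergent) improper integral $\Gamma(x,y):=\int_0^1(-\ln t)^{x-1}\big(-\ln(1-t)\big)^{y-1}\,dt$. $\Gamma'(1)$ is the derivative at $1$ of Euler's gamma function. *)

theory Defs
  imports "HOL-Analysis.Analysis"
begin

text \<open>The integrand is positive on (0,1), so the (convergent) improper integral
  coincides with the Lebesgue integral over the open interval.\<close>
definition Bigamma :: "real \<Rightarrow> real \<Rightarrow> real" where
  "Bigamma x y = (LBINT t:{0<..<1}. (- ln t) powr (x - 1) * (- ln (1 - t)) powr (y - 1))"

end

theory Submission
  imports Defs "HOL-Real_Asymp.Real_Asymp"
begin

text \<open>Writing the integrand as \<open>exp Y\<close> with \<open>Y t = (x - 1) ln(-ln t) + (y - 1) ln(-ln(1 - t))\<close>,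
  Jensen's inequality on the probability space \<open>(0,1)\<close> gives \<open>\<Gamma>(x,y) \<ge> exp (\<integral> Y)\<close>.
  The substitutions \<open>t = e\<^sup>-\<^sup>u\<close> and \<open>t = 1 - e\<^sup>-\<^sup>u\<close> turn both integrals \<open>\<integral> ln(-ln t)\<close> and
  \<open>\<integral> ln(-ln(1 - t))\<close> into \<open>J = \<integral>\<^sub>0\<^sup>\<infinity> e\<^sup>-\<^sup>u ln u du\<close>, so \<open>\<integral> Y = -J\<close> when \<open>x + y = 1\<close>.
  Finally \<open>J \<le> \<Gamma>'(1)\<close>, because \<open>u\<^sup>s\<^sup>-\<^sup>1 \<ge> 1 + (s - 1) ln u\<close> integrates to
  \<open>\<Gamma>(s) \<ge> 1 + (s - 1) J\<close>, a tangent line of \<open>\<Gamma>\<close> at \<open>1\<close>.\<close>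

lemma exp_set_integral_le_set_integral_exp:
  fixes Y :: "'a \<Rightarrow> real"
  assumes A: "A \<in> sets M" "emeasure M A = 1"
    and Y: "set_integrable M A Y" and exp_Y: "set_integrable M A (\<lambda>t. exp (Y t))"
  shows "exp (LINT t:A|M. Y t) \<le> (LINT t:A|M. exp (Y t))"
proof -
  define m where "m = (LINT t:A|M. Y t)"
  have const: "set_integrable M A (\<lambda>_. c)" for c :: real
    unfolding set_integrable_def using A by (intro integrable_indicator) auto
  have "exp m = (LINT t:A|M. exp m * (1 - m) + exp m * Y t)"
    using A Y const by (simp add: set_integral_const measure_def m_def algebra_simps)
  also have "\<dots> \<le> (LINT t:A|M. exp (Y t))"
  proof (rule set_integral_mono)
    show "set_integrable M A (\<lambda>t. exp m * (1 - m) + exp m * Y t)"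
      using Y const by (intro set_integral_add) auto
    fix t
    have "exp m * (1 + (Y t - m)) \<le> exp m * exp (Y t - m)"
      by (intro mult_left_mono exp_ge_add_one_self) auto
    then show "exp m * (1 - m) + exp m * Y t \<le> exp (Y t)"
      by (simp add: algebra_simps flip: exp_add)
  qed (fact exp_Y)
  finally show ?thesis unfolding m_def .
qed

lemma set_integral_reflect_unit_interval:
  fixes h :: "real \<Rightarrow> real"
  shows "set_integrable lborel {0<..<1} (\<lambda>t. h (1 - t)) \<longleftrightarrow> set_integrable lborel {0<..<1} h"
    and "(LBINT t:{0<..<1}. h (1 - t)) = (LBINT t:{0<..<1}. h t)"
proof -
  let ?k = "\<lambda>x::real. indicator {0<..<1} x *\<^sub>R h x"
  have k: "?k (1 + (-1) * x) = indicator {0<..<1} x *\<^sub>R h (1 - x)" for x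
    by (auto simp: indicator_def)
  show "set_integrable lborel {0<..<1} (\<lambda>t. h (1 - t)) \<longleftrightarrow> set_integrable lborel {0<..<1} h"
    unfolding set_integrable_def
    using lborel_integrable_real_affine_iff[of "-1" ?k 1] by (simp only: k)
  show "(LBINT t:{0<..<1}. h (1 - t)) = (LBINT t:{0<..<1}. h t)"
    unfolding set_lebesgue_integral_def
    using lborel_integral_real_affine[of "-1" ?k 1] by (simp only: k) simp
qed

lemma Gamma_real_set_integral:
  assumes "(s::real) > 0"
  shows "set_integrable lborel {0<..} (\<lambda>u. exp (-u) * u powr (s - 1))"
    and "(LBINT u:{0<..}. exp (-u) * u powr (s - 1)) = Gamma s"
proof -
  let ?f = "\<lambda>u::real. exp (-u) * u powr (s - 1)"
  have "((\<lambda>t. t powr (s - 1) / exp t) has_integral Gamma s) {0..}"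
    using assms by (rule Gamma_integral_real)
  then have "((\<lambda>t. if t \<in> {0<..} then t powr (s - 1) / exp t else 0) has_integral Gamma s) {0..}"
    by (rule has_integral_spike [of "{0}", rotated 2]) auto
  then have f: "(?f has_integral Gamma s) {0<..}"
    by (subst (asm) has_integral_restrict) (auto simp: exp_minus field_simps)
  then have "?f absolutely_integrable_on {0<..}"
    by (intro nonnegative_absolutely_integrable_1) (auto simp: has_integral_integrable)
  then show integrable: "set_integrable lborel {0<..} ?f"
    unfolding set_integrable_def
    by (subst (asm) integrable_completion)
      (auto intro!: borel_measurable_continuous_on_indicator continuous_intros)
  show "(LBINT u:{0<..}. ?f u) = Gamma s"
    using set_borel_integral_eq_integral(2)[OF integrable] f integral_unique by metis
qed

lemma abs_ln_le_powr:
  fixes u :: real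
  assumes "u > 0"
  shows "\<bar>ln u\<bar> \<le> 2 * u powr (1/2 - 1) + u powr (2 - 1)"
proof (cases "u \<ge> 1")
  case True
  then have "\<bar>ln u\<bar> \<le> u - 1"
    using ln_le_minus_one assms by simp
  moreover have "0 \<le> u powr (1/2 - 1)" "u powr (2 - 1) = u"
    using assms by simp_all
  ultimately show ?thesis
    by linarith
next
  case False
  then have "\<bar>ln u\<bar> = 2 * ln (u powr (-1/2))"
    using assms by (simp add: ln_powr)
  also have "\<dots> \<le> 2 * (u powr (-1/2) - 1)"
    using ln_le_minus_one[of "u powr (-1/2)"] assms by simp
  finally show ?thesis
    using assms by simp
qed

lemma set_integrable_exp_neg_mult_ln:
  "set_integrable lborel {0<..} (\<lambda>u::real. exp (-u) * ln u)"
proof (rule set_integrable_bound)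
  let ?g = "\<lambda>u::real. 2 * (exp (-u) * u powr (1/2 - 1)) + exp (-u) * u powr (2 - 1)"
  show "set_integrable lborel {0<..} ?g"
    using Gamma_real_set_integral(1)[of "1/2"] Gamma_real_set_integral(1)[of 2]
    by (intro set_integral_add) auto
  show "set_borel_measurable lborel {0<..} (\<lambda>u::real. exp (-u) * ln u)"
    unfolding set_borel_measurable_def by measurable
  have "norm (exp (-u) * ln u) \<le> norm (?g u)" if "u > 0" for u :: real
  proof -
    have "norm (exp (-u) * ln u) = exp (-u) * \<bar>ln u\<bar>"
      by (simp add: abs_mult)
    also have "\<dots> \<le> exp (-u) * (2 * u powr (1/2 - 1) + u powr (2 - 1))"
      using abs_ln_le_powr[OF that] by (intro mult_left_mono) auto
    finally show ?thesis
      by (simp add: algebra_simps)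
  qed
  then show "AE u in lborel. u \<in> {0<..} \<longrightarrow> norm (exp (-u) * ln u) \<le> norm (?g u)"
    by (intro AE_I2) auto
qed

lemma Gamma_real_ge_tangent_at_1:
  assumes "(s::real) > 0"
  shows "1 + (s - 1) * (LBINT u:{0<..}. exp (-u) * ln u) \<le> Gamma s"
proof -
  have "set_integrable lborel {0<..} (\<lambda>u::real. exp (-u) * u powr (1 - 1))
          = set_integrable lborel {0<..} (\<lambda>u::real. exp (-u))"
    by (rule set_integrable_cong) auto
  then have exp_neg: "set_integrable lborel {0<..} (\<lambda>u::real. exp (-u))"
    using Gamma_real_set_integral(1)[OF zero_less_one] by blast
  have "(LBINT u::real:{0<..}. exp (-u) * u powr (1 - 1)) = (LBINT u::real:{0<..}. exp (-u))"
    by (rule set_lebesgue_integral_cong) auto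
  then have exp_neg_integral: "(LBINT u::real:{0<..}. exp (-u)) = 1"
    using Gamma_real_set_integral(2)[OF zero_less_one] by (simp only: Gamma_1)
  have "1 + (s - 1) * (LBINT u:{0<..}. exp (-u) * ln u) =
        (LBINT u:{0<..}. exp (-u) + (s - 1) * (exp (-u) * ln u))"
    using exp_neg set_integrable_exp_neg_mult_ln by (simp add: exp_neg_integral)
  also have "\<dots> \<le> (LBINT u:{0<..}. exp (-u) * u powr (s - 1))"
  proof (rule set_integral_mono)
    show "set_integrable lborel {0<..} (\<lambda>u::real. exp (-u) + (s - 1) * (exp (-u) * ln u))"
      using exp_neg set_integrable_exp_neg_mult_ln by (intro set_integral_add) auto
    show "set_integrable lborel {0<..} (\<lambda>u::real. exp (-u) * u powr (s - 1))"
      using Gamma_real_set_integral(1) assms .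
    fix u :: real
    assume "u \<in> {0<..}"
    then have "1 + (s - 1) * ln u \<le> u powr (s - 1)"
      using exp_ge_add_one_self[of "(s - 1) * ln u"] by (simp add: powr_def)
    then have "exp (-u) * (1 + (s - 1) * ln u) \<le> exp (-u) * u powr (s - 1)"
      by (intro mult_left_mono) auto
    then show "exp (-u) + (s - 1) * (exp (-u) * ln u) \<le> exp (-u) * u powr (s - 1)"
      by (simp add: algebra_simps)
  qed
  also have "\<dots> = Gamma s"
    using Gamma_real_set_integral(2) assms .
  finally show ?thesis .
qed

lemma set_integral_exp_neg_mult_ln_le_deriv_Gamma:
  "(LBINT u:{0<..}. exp (-u) * ln u) \<le> deriv (Gamma :: real \<Rightarrow> real) 1"
proof -
  define J where "J = (LBINT u:{0<..}. exp (-u) * ln (u::real))"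
  have "(1::real) \<notin> \<int>\<^sub>\<le>\<^sub>0"
    by (auto elim!: nonpos_Ints_cases)
  then have Gamma_deriv: "((Gamma :: real \<Rightarrow> real) has_field_derivative deriv Gamma 1) (at 1)"
    using has_field_derivative_Gamma DERIV_imp_deriv by metis
  have "((\<lambda>s. (Gamma s - Gamma 1) / (s - 1)) \<longlongrightarrow> deriv Gamma (1::real)) (at_right 1)"
    using has_field_derivative_at_within[OF Gamma_deriv, of "{1<..}"]
    unfolding has_field_derivative_iff by simp
  moreover have "\<forall>\<^sub>F s in at_right (1::real). J \<le> (Gamma s - Gamma 1) / (s - 1)"
    using eventually_at_right_less[of "1::real"]
  proof (rule eventually_mono)
    fix s :: real
    assume "1 < s"
    with Gamma_real_ge_tangent_at_1[of s] show "J \<le> (Gamma s - Gamma 1) / (s - 1)"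
      by (simp add: J_def field_simps)
  qed
  ultimately show ?thesis
    unfolding J_def[symmetric] by (intro tendsto_le[OF _ _ tendsto_const]) simp_all
qed

lemma isCont_comp_neg_ln_one_minus:
  fixes G :: "real \<Rightarrow> real"
  assumes "\<And>u. u > 0 \<Longrightarrow> isCont G u" and "t \<in> {0<..<1}"
  shows "isCont (\<lambda>t. G (-ln (1 - t))) t"
proof -
  have "isCont (\<lambda>t. -ln (1 - t)) t"
    using assms(2) by (intro continuous_intros) auto
  moreover have "isCont G (-ln (1 - t))"
    using assms by auto
  ultimately show ?thesis
    by (rule isCont_o2)
qed

text \<open>Integrability is transferred through \<open>\<bar>F\<bar>\<close>, since the library's substitution rule
  that yields integrability requires a nonnegative integrand.\<close>

lemma set_integral_substitution_one_minus_exp_neg: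
  fixes F :: "real \<Rightarrow> real"
  assumes cont: "\<And>u. u > 0 \<Longrightarrow> isCont F u"
    and integrable: "set_integrable lborel {0<..} (\<lambda>u. exp (-u) * F u)"
  shows "set_integrable lborel {0<..<1} (\<lambda>t. F (-ln (1 - t)))"
    and "(LBINT t:{0<..<1}. F (-ln (1 - t))) = (LBINT u:{0<..}. exp (-u) * F u)"
proof -
  let ?g = "\<lambda>u::real. 1 - exp (-u)"
  have lim_0: "((ereal \<circ> ?g \<circ> real_of_ereal) \<longlongrightarrow> ereal 0) (at_right (ereal 0))"
    by (simp add: ereal_tendsto_simps) (intro tendsto_eq_intros, auto)
  have lim_inf: "((ereal \<circ> ?g \<circ> real_of_ereal) \<longlongrightarrow> ereal 1) (at_left \<infinity>)"
    by (simp add: ereal_tendsto_simps) real_asymp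
  have g_unit: "?g u \<in> {0<..<1}" if "u > 0" for u
    using that by auto
  have cont_F: "isCont (\<lambda>t. F (-ln (1 - t))) t" if "t \<in> {0<..<1}" for t
    using cont that by (rule isCont_comp_neg_ln_one_minus)
  have cont_abs_F: "isCont (\<lambda>t. \<bar>F (-ln (1 - t))\<bar>) t" if "t \<in> {0<..<1}" for t
    using cont_F[OF that] by (rule isCont_rabs)
  have "set_integrable lborel {0<..} (\<lambda>u. \<bar>exp (-u) * F u\<bar>)
          = set_integrable lborel {0<..} (\<lambda>u. \<bar>F (-ln (1 - ?g u))\<bar> * exp (-u))"
    by (rule set_integrable_cong) (auto simp: abs_mult)
  then have abs_integrable:
      "set_integrable lborel (einterval (ereal 0) \<infinity>) (\<lambda>u. \<bar>F (-ln (1 - ?g u))\<bar> * exp (-u))"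
    using set_integrable_abs[OF integrable] by simp
  have "set_integrable lborel (einterval (ereal 0) (ereal 1)) (\<lambda>t. \<bar>F (-ln (1 - t))\<bar>)"
    by (rule interval_integral_substitution_nonneg(1)[OF _ _ _ _ _ _ lim_0 lim_inf abs_integrable])
      (auto intro!: derivative_eq_intros cont_abs_F g_unit simp: einterval_iff)
  moreover have "set_borel_measurable lborel {0<..<1} (\<lambda>t. F (-ln (1 - t)))"
    unfolding set_borel_measurable_def measurable_lborel2
    by (intro borel_measurable_continuous_on_indicator continuous_at_imp_continuous_on) (auto intro: cont_F)
  ultimately show F_integrable: "set_integrable lborel {0<..<1} (\<lambda>t. F (-ln (1 - t)))"
    by (simp add: set_integrable_abs_iff)
  have "(LBINT t=ereal 0..ereal 1. F (-ln (1 - t)))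
          = (LBINT u=ereal 0..\<infinity>. exp (-u) *\<^sub>R F (-ln (1 - ?g u)))"
    using integrable F_integrable
    by (intro interval_integral_substitution_integrable[OF _ _ _ _ _ lim_0 lim_inf])
      (auto intro!: derivative_eq_intros cont_F g_unit simp: einterval_iff)
  then show "(LBINT t:{0<..<1}. F (-ln (1 - t))) = (LBINT u:{0<..}. exp (-u) * F u)"
    by (simp add: interval_integral_Ioo interval_integral_Ioi)
qed

lemma set_integral_ln_neg_ln:
  shows "set_integrable lborel {0<..<1} (\<lambda>t::real. ln (-ln t))"
    and "(LBINT t:{0<..<1}. ln (-ln t)) = (LBINT u::real:{0<..}. exp (-u) * ln u)"
    and "set_integrable lborel {0<..<1} (\<lambda>t::real. ln (-ln (1 - t)))"
    and "(LBINT t:{0<..<1}. ln (-ln (1 - t))) = (LBINT u::real:{0<..}. exp (-u) * ln u)"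
proof -
  note subst = set_integral_substitution_one_minus_exp_neg[of ln, OF _ set_integrable_exp_neg_mult_ln]
  show "set_integrable lborel {0<..<1} (\<lambda>t::real. ln (-ln (1 - t)))"
    and "(LBINT t:{0<..<1}. ln (-ln (1 - t))) = (LBINT u::real:{0<..}. exp (-u) * ln u)"
    by (rule subst; auto intro: continuous_intros)+
  then show "set_integrable lborel {0<..<1} (\<lambda>t::real. ln (-ln t))"
    and "(LBINT t:{0<..<1}. ln (-ln t)) = (LBINT u::real:{0<..}. exp (-u) * ln u)"
    using set_integral_reflect_unit_interval[of "\<lambda>t. ln (-ln (1 - t))"] by simp_all
qed

lemma set_integrable_Bigamma_integrand:
  fixes x y :: real
  assumes "0 < x" "x \<le> 1" "0 < y" "y \<le> 1"
  shows "set_integrable lborel {0<..<1} (\<lambda>t. (-ln t) powr (x - 1) * (-ln (1 - t)) powr (y - 1))"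
proof (rule set_integrable_bound)
  show "set_integrable lborel {0<..<1} (\<lambda>t::real. t powr (y - 1) * (1 - t) powr (x - 1))"
    using assms by (intro set_integrable_subset[OF integrable_Beta[of y x]]) auto
  show "set_borel_measurable lborel {0<..<1} (\<lambda>t. (-ln t) powr (x - 1) * (-ln (1 - t)) powr (y - 1))"
    unfolding set_borel_measurable_def by measurable
  have "norm ((-ln t) powr (x - 1) * (-ln (1 - t)) powr (y - 1))
          \<le> norm (t powr (y - 1) * (1 - t) powr (x - 1))" if t: "t \<in> {0<..<1}" for t
  proof -
    have "1 - t \<le> -ln t" "t \<le> -ln (1 - t)"
      using ln_le_minus_one[of t] ln_le_minus_one[of "1 - t"] t by auto
    then have "(-ln t) powr (x - 1) \<le> (1 - t) powr (x - 1)"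
        and "(-ln (1 - t)) powr (y - 1) \<le> t powr (y - 1)"
      using t assms by (auto intro!: powr_mono2')
    then have "(-ln t) powr (x - 1) * (-ln (1 - t)) powr (y - 1) \<le> (1 - t) powr (x - 1) * t powr (y - 1)"
      by (intro mult_mono) auto
    then show ?thesis
      by (simp add: mult.commute)
  qed
  then show "AE t in lborel. t \<in> {0<..<1} \<longrightarrow> norm ((-ln t) powr (x - 1) * (-ln (1 - t)) powr (y - 1))
               \<le> norm (t powr (y - 1) * (1 - t) powr (x - 1))"
    by (intro AE_I2) auto
qed

lemma Bigamma_ge_exp_set_integral_exp_neg_mult_ln:
  fixes x y :: real
  assumes "0 < x" "x \<le> 1" "0 < y" "y \<le> 1"
  shows "exp ((x + y - 2) * (LBINT u:{0<..}. exp (-u) * ln u)) \<le> Bigamma x y"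
proof -
  define J where "J = (LBINT u::real:{0<..}. exp (-u) * ln u)"
  define Y where "Y t = (x - 1) * ln (-ln t) + (y - 1) * ln (-ln (1 - t))" for t :: real
  have integrand: "(-ln t) powr (x - 1) * (-ln (1 - t)) powr (y - 1) = exp (Y t)"
    if "t \<in> {0<..<1}" for t
    using that by (simp add: Y_def powr_def flip: exp_add)
  have "set_integrable lborel {0<..<1} (\<lambda>t. (-ln t) powr (x - 1) * (-ln (1 - t)) powr (y - 1))
          = set_integrable lborel {0<..<1} (\<lambda>t. exp (Y t))"
    by (rule set_integrable_cong[OF refl refl]) (rule integrand)
  then have exp_Y: "set_integrable lborel {0<..<1} (\<lambda>t. exp (Y t))"
    using set_integrable_Bigamma_integrand[OF assms] by blast
  have Y: "set_integrable lborel {0<..<1} Y"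
    unfolding Y_def using set_integral_ln_neg_ln(1,3) by (intro set_integral_add) auto
  have "(LBINT t:{0<..<1}. Y t) = (x - 1) * J + (y - 1) * J"
    unfolding Y_def J_def using set_integral_ln_neg_ln by simp
  then have "exp ((x + y - 2) * J) = exp (LBINT t:{0<..<1}. Y t)"
    by (simp add: algebra_simps)
  also have "\<dots> \<le> (LBINT t:{0<..<1}. exp (Y t))"
    by (rule exp_set_integral_le_set_integral_exp[OF _ _ Y exp_Y]) simp_all
  also have "\<dots> = Bigamma x y"
    unfolding Bigamma_def by (rule set_lebesgue_integral_cong) (auto simp: integrand)
  finally show ?thesis
    unfolding J_def .
qed

theorem mainTheorem12:
  fixes x :: real
  assumes "0 < x" and "x < 1"
  shows "Bigamma x (1 - x) \<ge> exp (- deriv (Gamma :: real \<Rightarrow> real) 1)"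
proof -
  have "exp (- deriv Gamma 1) \<le> exp (- (LBINT u::real:{0<..}. exp (-u) * ln u))"
    using set_integral_exp_neg_mult_ln_le_deriv_Gamma by simp
  also have "\<dots> \<le> Bigamma x (1 - x)"
    using Bigamma_ge_exp_set_integral_exp_neg_mult_ln[of x "1 - x"] assms by simp
  finally show ?thesis .
qed

end
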